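(* For $i\in\{0,1\}$, let $N_i\subseteq W({\rm G}_2)$ be the stabilizer of the root $\beta_i$ under the action of $W({\rm G}_2)$ on $\Psi^+$ described in the context. Then for every $a\in N_i$ we have $ae_ia^{-1}=e_i$ in ${\rm Br}({\rm G}_2)$.
   Context: Let $\delta$ be an indeterminate. ${\rm Br}({\rm G}_2)$ is the $\mathbb{Z}[\delta^{\pm1}]$-algebra generated by $r_0,r_1,e_0,e_1$ subject to the following relations: - $r_0^2=r_1^2=1$; - $r_ie_i=e_ir_i=e_i$ for $i=0,1$; - $e_0^2=\delta^3e_0$ and $e_1^2=\delta e_1$; - $r_0e_1e_0=r_1e_0$ and $e_0e_1r_0=e_0r_1$; - $e_1r_0e_1r_0e_1=e_1$ and $e_1r_0e_1r_0r_1=e_1r_0r_1r_0$; - $e_0r_1e_0=\delta^2e_0$; - $r_1r_0e_1r_0e_1=r_0r_1r_0e_1$; - $(r_1r_0)^6=1$. Let $\Psi$ be a root system of type ${\rm G}_2$ with simple roots $\beta_0$ (short) and $\beta_1$ (long), and positive roots $\Psi^+=\{\beta_0,\beta_1,\beta_0+\beta_1,2\beta_0+\beta_1,3\beta_0+\beta_1,3\beta_0+2\beta_1\}$. $W({\rm G}_2)$ is generated by the reflections $s_0,s_1$ in $\beta_0,\beta_1$. It acts on $\Psi^+$ by $w\cdot\beta=$ the unique element of $\Psi^+\cap\{\pm w\beta\}$. The subgroup of units of ${\rm Br}({\rm G}_2)$ generated by $r_0,r_1$ is isomorphic to $W({\rm G}_2)$ via $r_i\mapsto s_i$. Through this isomorphism,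 elements of $W({\rm G}_2)$ are regarded as elements of ${\rm Br}({\rm G}_2)$. *)

theory Defs
  imports Main
begin

text \<open>Roots are coordinate pairs (c0, c1) meaning c0*beta0 + c1*beta1.
 beta0 short, beta1 long; Cartan integers <beta1,beta0^v> = -3, <beta0,beta1^v> = -1.\<close>

type_synonym root = "int \<times> int"

definition beta :: "nat \<Rightarrow> root" where
  "beta i = (if i = 0 then (1, 0) else (0, 1))"

definition neg_root :: "root \<Rightarrow> root" where
  "neg_root v = (- fst v, - snd v)"

definition Psi_pos :: "root set" where
  "Psi_pos = {(1,0), (0,1), (1,1), (2,1), (3,1), (3,2)}"

definition refl :: "nat \<Rightarrow> root \<Rightarrow> root" where
  "refl i v = (if i = 0 then (3 * snd v - fst v, snd v) else (fst v, fst v - snd v))"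

text \<open>An element of W(G2) is represented by a word [i1,...,ik] over {0,1},
  standing for s_{i1} ... s_{ik}; its linear action on the root lattice:\<close>
definition wact :: "nat list \<Rightarrow> root \<Rightarrow> root" where
  "wact w v = foldr refl w v"

definition wdot :: "nat list \<Rightarrow> root \<Rightarrow> root" where
  "wdot w v = (THE g. g \<in> Psi_pos \<and> (g = wact w v \<or> g = neg_root (wact w v)))"

definition is_word :: "nat list \<Rightarrow> bool" where
  "is_word w \<longleftrightarrow> set w \<subseteq> {0, 1}"

definition N_stab :: "nat \<Rightarrow> nat list set" where
  "N_stab i = {w. is_word w \<and> wdot w (beta i) = beta i}"

text \<open>Br(G2) is the Z[delta^{+-1}]-algebra presented by generators and relations,
 so an identity among the generators holds in Br(G2) iff it holds in every
 Z[delta^{+-1}]-algebra, i.e. every ring A with a central unit d, containing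
 elements r0 r1 e0 e1 satisfying the relations.\<close>

definition BrG2_rels :: "'a::ring_1 \<Rightarrow> 'a \<Rightarrow> 'a \<Rightarrow> 'a \<Rightarrow> 'a \<Rightarrow> bool" where
  "BrG2_rels d r0 r1 e0 e1 \<longleftrightarrow>
     (\<forall>x. d * x = x * d) \<and> (\<exists>d'. d * d' = 1 \<and> d' * d = 1) \<and>
     r0 * r0 = 1 \<and> r1 * r1 = 1 \<and>
     r0 * e0 = e0 \<and> e0 * r0 = e0 \<and> r1 * e1 = e1 \<and> e1 * r1 = e1 \<and>
     e0 * e0 = d ^ 3 * e0 \<and> e1 * e1 = d * e1 \<and>
     r0 * e1 * e0 = r1 * e0 \<and> e0 * e1 * r0 = e0 * r1 \<and>
     e1 * r0 * e1 * r0 * e1 = e1 \<and> e1 * r0 * e1 * r0 * r1 = e1 * r0 * r1 * r0 \<and>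
     e0 * r1 * e0 = d ^ 2 * e0 \<and>
     r1 * r0 * e1 * r0 * e1 = r0 * r1 * r0 * e1 \<and>
     (r1 * r0) ^ 6 = 1"

definition weval :: "'a::ring_1 \<Rightarrow> 'a \<Rightarrow> nat list \<Rightarrow> 'a" where
  "weval r0 r1 w = foldr (\<lambda>i x. (if i = 0 then r0 else r1) * x) w 1"

end

theory Submission
  imports Defs
begin

text \<open>Modulo the relations \<open>r\<^sub>0\<^sup>2 = r\<^sub>1\<^sup>2 = (r\<^sub>1r\<^sub>0)\<^sup>6 = 1\<close>, every word equals one of the
  twelve reduced words of the dihedral group \<open>W(G\<^sub>2)\<close>, both in the algebra and as an
  action on roots; moreover \<open>weval (rev a)\<close> is the inverse of \<open>weval a\<close>. So it
  suffices to list the four reduced words fixing \<open>\<beta>\<^sub>i\<close> (the identity, \<open>s\<^sub>\<beta>\<^sub>i\<close>, the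
  reflection in the root orthogonal to \<open>\<beta>\<^sub>i\<close>, and the longest element) and verify the
  conjugation identity for each. The non-trivial cases come from
  \<open>r\<^sub>1r\<^sub>0r\<^sub>1r\<^sub>0r\<^sub>1 e\<^sub>0 = e\<^sub>0 = e\<^sub>0 r\<^sub>1r\<^sub>0r\<^sub>1r\<^sub>0r\<^sub>1\<close> and
  \<open>r\<^sub>0r\<^sub>1r\<^sub>0r\<^sub>1r\<^sub>0 e\<^sub>1 r\<^sub>0r\<^sub>1r\<^sub>0r\<^sub>1r\<^sub>0 = e\<^sub>1\<close>, consequences of the mixed relations.\<close>

lemma weval_Nil [simp]: "weval r0 r1 [] = 1"
  by (simp add: weval_def)

lemma weval_Cons [simp]: "weval r0 r1 (i # w) = (if i = 0 then r0 else r1) * weval r0 r1 w"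
  by (simp add: weval_def)

lemma weval_append: "weval r0 r1 (u @ w) = weval r0 r1 u * weval r0 r1 w"
  by (induction u) (simp_all add: mult.assoc)

lemma wact_Nil [simp]: "wact [] v = v"
  by (simp add: wact_def)

lemma wact_Cons [simp]: "wact (i # w) v = refl i (wact w v)"
  by (simp add: wact_def)

lemma is_word_Cons [simp]: "is_word (i # w) \<longleftrightarrow> i \<in> {0, 1} \<and> is_word w"
  by (auto simp: is_word_def)

lemma wdot_eqI:
  assumes "g \<in> Psi_pos" and "g = wact w v \<or> g = neg_root (wact w v)"
  shows "wdot w v = g"
  unfolding wdot_def
proof (rule the_equality)
  fix g' assume "g' \<in> Psi_pos \<and> (g' = wact w v \<or> g' = neg_root (wact w v))"
  then show "g' = g"
    using assms by (cases "wact w v") (auto simp: Psi_pos_def neg_root_def)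
qed (use assms in blast)

lemma wdot_fixed_imp_wact:
  assumes "wdot w v = v" and "v \<in> Psi_pos"
    and "wact w v \<in> Psi_pos \<or> neg_root (wact w v) \<in> Psi_pos"
  shows "wact w v = v \<or> wact w v = neg_root v"
proof -
  have "wdot w v = (if wact w v \<in> Psi_pos then wact w v else neg_root (wact w v))"
    using assms(3) by (intro wdot_eqI) auto
  then show ?thesis
    using assms(1) by (cases "wact w v") (auto simp: neg_root_def split: if_splits)
qed

definition reduced_words :: "nat list list" where
  "reduced_words = [[], [0], [1], [0,1], [1,0], [0,1,0], [1,0,1], [0,1,0,1], [1,0,1,0],
     [0,1,0,1,0], [1,0,1,0,1], [0,1,0,1,0,1]]"

text \<open>Reduced word of \<open>s\<^sub>i c\<close>; \<open>[1,0,1,0,1,0]\<close> is replaced by \<open>[0,1,0,1,0,1]\<close>.\<close>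
definition reduce_Cons :: "nat \<Rightarrow> nat list \<Rightarrow> nat list" where
  "reduce_Cons i c =
     (if c \<noteq> [] \<and> hd c = i then tl c
      else if i = 1 \<and> c = [0,1,0,1,0] then [0,1,0,1,0,1]
      else if i = 1 \<and> c = [0,1,0,1,0,1] then [0,1,0,1,0]
      else i # c)"

lemma reduce_Cons_in_reduced_words:
  assumes "c \<in> set reduced_words" and "i \<in> {0, 1}"
  shows "reduce_Cons i c \<in> set reduced_words"
  using assms unfolding reduced_words_def
  by (simp only: set_simps insert_iff empty_iff) (elim disjE; simp add: reduce_Cons_def)

lemma reduced_word_is_word: "c \<in> set reduced_words \<Longrightarrow> is_word c"
  unfolding reduced_words_def
  by (simp only: set_simps insert_iff empty_iff) (elim disjE; simp add: is_word_def)

lemma wact_reduce_Cons: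
  assumes "c \<in> set reduced_words" and "i \<in> {0, 1}"
  shows "wact (i # c) v = wact (reduce_Cons i c) v"
  using assms unfolding reduced_words_def
  by (simp only: set_simps insert_iff empty_iff) (elim disjE; simp add: reduce_Cons_def refl_def)

locale dihedral_order_12 =
  fixes r0 r1 :: "'a::ring_1"
  assumes r0_sq: "r0 * r0 = 1" and r1_sq: "r1 * r1 = 1" and r1r0_order: "(r1 * r0) ^ 6 = 1"
begin

lemma r0_cancel [simp]: "r0 * (r0 * x) = x"
  by (metis mult.assoc mult_1_left r0_sq)

lemma r1_cancel [simp]: "r1 * (r1 * x) = x"
  by (metis mult.assoc mult_1_left r1_sq)

lemma braid_relation: "r1 * (r0 * (r1 * (r0 * (r1 * r0)))) = r0 * (r1 * (r0 * (r1 * (r0 * r1))))"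
proof -
  define u where "u = r1 * (r0 * (r1 * (r0 * (r1 * r0))))"
  define u' where "u' = r0 * (r1 * (r0 * (r1 * (r0 * r1))))"
  have u_involution: "u * u = 1"
    using r1r0_order by (simp add: u_def numeral_eq_Suc mult.assoc)
  have u'_inverse: "u' * u = 1"
    by (simp add: u_def u'_def mult.assoc r0_sq)
  have "u' = (u' * u) * u"
    by (simp add: mult.assoc u_involution)
  also have "\<dots> = u"
    by (simp add: u'_inverse)
  finally show ?thesis
    unfolding u_def u'_def by (rule sym)
qed

lemma braid_relation_left:
  "r1 * (r0 * (r1 * (r0 * (r1 * (r0 * x))))) = r0 * (r1 * (r0 * (r1 * (r0 * (r1 * x)))))"
  using arg_cong[OF braid_relation, of "\<lambda>y. y * x"] by (simp add: mult.assoc)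

lemma weval_reduce_Cons:
  assumes "c \<in> set reduced_words" and "i \<in> {0, 1}"
  shows "weval r0 r1 (i # c) = weval r0 r1 (reduce_Cons i c)"
  using assms unfolding reduced_words_def
  by (simp only: set_simps insert_iff empty_iff)
    (elim disjE; simp add: reduce_Cons_def mult.assoc r0_sq r1_sq braid_relation braid_relation_left)

lemma reduced_word_exists:
  assumes "is_word a"
  shows "\<exists>c\<in>set reduced_words. weval r0 r1 a = weval r0 r1 c \<and> wact a = wact c"
  using assms
proof (induction a)
  case Nil
  show ?case
    by (rule bexI[of _ "[]"]) (simp_all add: reduced_words_def)
next
  case (Cons i a)
  then have i: "i \<in> {0, 1}" and "is_word a"
    by simp_all
  then obtain c where c: "c \<in> set reduced_words"
    and weval_c: "weval r0 r1 a = weval r0 r1 c" and wact_c: "wact a = wact c"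
    using Cons.IH by blast
  have "weval r0 r1 (i # a) = weval r0 r1 (reduce_Cons i c)"
    using weval_c weval_reduce_Cons[OF c i] by simp
  moreover have "wact (i # a) = wact (reduce_Cons i c)"
    using wact_c wact_reduce_Cons[OF c i] by (intro ext) simp
  ultimately show ?case
    using reduce_Cons_in_reduced_words[OF c i] by blast
qed

lemma weval_rev_inverse:
  assumes "is_word a"
  shows "weval r0 r1 a * weval r0 r1 (rev a) = 1 \<and> weval r0 r1 (rev a) * weval r0 r1 a = 1"
  using assms
proof (induction a)
  case (Cons i a)
  define g where "g = (if i = 0 then r0 else r1)"
  have "g * g = 1"
    by (simp add: g_def r0_sq r1_sq)
  moreover have "weval r0 r1 (i # a) * weval r0 r1 (rev (i # a))
      = g * (weval r0 r1 a * weval r0 r1 (rev a)) * g"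
    and "weval r0 r1 (rev (i # a)) * weval r0 r1 (i # a)
      = weval r0 r1 (rev a) * (g * g) * weval r0 r1 a"
    by (simp_all add: g_def weval_append mult.assoc)
  ultimately show ?case
    using Cons by simp
qed simp

lemma weval_rev_eq:
  assumes "is_word a" and "is_word c" and "weval r0 r1 a = weval r0 r1 c"
  shows "weval r0 r1 (rev a) = weval r0 r1 (rev c)"
proof -
  have "weval r0 r1 (rev a) = weval r0 r1 (rev a) * (weval r0 r1 c * weval r0 r1 (rev c))"
    using weval_rev_inverse[OF assms(2)] by simp
  also have "\<dots> = (weval r0 r1 (rev a) * weval r0 r1 a) * weval r0 r1 (rev c)"
    using assms(3) by (simp add: mult.assoc)
  also have "\<dots> = weval r0 r1 (rev c)"
    using weval_rev_inverse[OF assms(1)] by simp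
  finally show ?thesis .
qed

end

definition reduced_stabilizer :: "nat \<Rightarrow> nat list set" where
  "reduced_stabilizer i =
     (if i = 0 then {[], [0], [1,0,1,0,1], [0,1,0,1,0,1]} else {[], [1], [0,1,0,1,0], [0,1,0,1,0,1]})"

lemma reduced_word_stabilizer:
  assumes "c \<in> set reduced_words" and "i \<in> {0, 1}" and "wdot c (beta i) = beta i"
  shows "c \<in> reduced_stabilizer i"
proof -
  have "beta i \<in> Psi_pos"
    using assms(2) by (auto simp: beta_def Psi_pos_def)
  moreover have "wact c (beta i) \<in> Psi_pos \<or> neg_root (wact c (beta i)) \<in> Psi_pos"
    using assms(1,2) unfolding reduced_words_def
    by (simp only: set_simps insert_iff empty_iff)
      (elim disjE; simp add: beta_def refl_def neg_root_def Psi_pos_def)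
  ultimately have "wact c (beta i) = beta i \<or> wact c (beta i) = neg_root (beta i)"
    using assms(3) by (rule wdot_fixed_imp_wact[rotated])
  then show ?thesis
    using assms(1,2) unfolding reduced_words_def
    by (simp only: set_simps insert_iff empty_iff)
      (elim disjE; simp add: reduced_stabilizer_def beta_def refl_def neg_root_def)
qed

locale brauer_G2 =
  fixes d r0 r1 e0 e1 :: "'a::ring_1"
  assumes rels: "BrG2_rels d r0 r1 e0 e1"

sublocale brauer_G2 \<subseteq> dihedral_order_12 r0 r1
  using rels by unfold_locales (simp_all add: BrG2_rels_def)

context brauer_G2
begin

lemma relations:
  "r0 * e0 = e0" "e0 * r0 = e0" "r1 * e1 = e1" "e1 * r1 = e1"
  "r0 * e1 * e0 = r1 * e0" "e0 * e1 * r0 = e0 * r1"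
  "e1 * r0 * e1 * r0 * e1 = e1" "e1 * r0 * e1 * r0 * r1 = e1 * r0 * r1 * r0"
  "r1 * r0 * e1 * r0 * e1 = r0 * r1 * r0 * e1"
  using rels by (simp_all add: BrG2_rels_def)

lemma r0_e0: "r0 * (e0 * x) = e0 * x" and e0_r0: "e0 * (r0 * x) = e0 * x"
  and r1_e1: "r1 * (e1 * x) = e1 * x" and e1_r1: "e1 * (r1 * x) = e1 * x"
  and r0_e1_e0: "r0 * (e1 * (e0 * x)) = r1 * (e0 * x)"
  and e0_e1_r0: "e0 * (e1 * (r0 * x)) = e0 * (r1 * x)"
  and e1_r0_e1_r0_e1: "e1 * (r0 * (e1 * (r0 * (e1 * x)))) = e1 * x"
  and e1_r0_e1_r0_r1: "e1 * (r0 * (e1 * (r0 * (r1 * x)))) = e1 * (r0 * (r1 * (r0 * x)))"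
  and r1_r0_e1_r0_e1: "r1 * (r0 * (e1 * (r0 * (e1 * x)))) = r0 * (r1 * (r0 * (e1 * x)))"
  by (simp_all add: relations flip: mult.assoc)

text \<open>\<open>r\<^sub>1r\<^sub>0r\<^sub>1r\<^sub>0r\<^sub>1\<close> is the reflection in \<open>3\<beta>\<^sub>0 + 2\<beta>\<^sub>1\<close>, the root orthogonal to \<open>\<beta>\<^sub>0\<close>;
  it is absorbed by \<open>e\<^sub>0\<close> on either side because \<open>r\<^sub>1e\<^sub>0 = r\<^sub>0e\<^sub>1e\<^sub>0\<close>.\<close>

lemma e0_absorbs_left: "r1 * (r0 * (r1 * (r0 * (r1 * (e0 * x))))) = e0 * x"
proof -
  have "r1 * (r0 * (r1 * (r0 * (r1 * (e0 * x))))) = r1 * (r0 * (r1 * (r0 * (r0 * (e1 * (e0 * x))))))"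
    by (simp only: r0_e1_e0)
  also have "\<dots> = r1 * (r0 * (e1 * (e0 * x)))"
    by (simp add: r1_e1)
  also have "\<dots> = e0 * x"
    by (simp add: r0_e1_e0)
  finally show ?thesis .
qed

lemma e0_absorbs_right: "e0 * (r1 * (r0 * (r1 * (r0 * (r1 * x))))) = e0 * x"
proof -
  have "e0 * (r1 * (r0 * (r1 * (r0 * (r1 * x))))) = e0 * (e1 * (r0 * (r0 * (r1 * (r0 * (r1 * x))))))"
    by (simp only: e0_e1_r0)
  also have "\<dots> = e0 * (e1 * (r0 * (r1 * x)))"
    by (simp add: e1_r1)
  also have "\<dots> = e0 * x"
    by (simp add: e0_e1_r0)
  finally show ?thesis .
qed

lemma r0r1r0_e1_r0r1r0:
  "r0 * (r1 * (r0 * (e1 * (r0 * (r1 * (r0 * x)))))) = r1 * (r0 * (e1 * (r0 * (r1 * x))))"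
proof -
  have "r0 * (r1 * (r0 * (e1 * (r0 * (r1 * (r0 * x))))))
      = r1 * (r0 * (e1 * (r0 * (e1 * (r0 * (r1 * (r0 * x)))))))"
    by (simp only: r1_r0_e1_r0_e1)
  also have "\<dots> = r1 * (r0 * (e1 * (r0 * (e1 * (r0 * (e1 * (r0 * (r1 * x))))))))"
    by (simp only: e1_r0_e1_r0_r1)
  also have "\<dots> = r1 * (r0 * (e1 * (r0 * (r1 * x))))"
    by (simp only: e1_r0_e1_r0_e1)
  finally show ?thesis .
qed

text \<open>\<open>r\<^sub>0r\<^sub>1r\<^sub>0r\<^sub>1r\<^sub>0\<close> is the reflection in \<open>2\<beta>\<^sub>0 + \<beta>\<^sub>1\<close>, the root orthogonal to \<open>\<beta>\<^sub>1\<close>.\<close>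

lemma e1_conj_r0r1r0r1r0:
  "r0 * (r1 * (r0 * (r1 * (r0 * (e1 * (r0 * (r1 * (r0 * (r1 * (r0 * x)))))))))) = e1 * x"
  using r0r1r0_e1_r0r1r0[of "r1 * (r0 * x)"] by simp

lemmas absorption_at_1 = r0_e0[of 1] e0_r0[of 1] r1_e1[of 1] e1_r1[of 1]
  e0_absorbs_left[of 1] e0_absorbs_right[of 1] e1_conj_r0r1r0r1r0[of 1]

lemma e0_conj_stabilizer:
  assumes "c \<in> reduced_stabilizer 0"
  shows "weval r0 r1 c * e0 * weval r0 r1 (rev c) = e0"
  using assms
  by (simp add: reduced_stabilizer_def)
    (elim disjE; simp add: mult.assoc r0_e0 e0_r0 e0_absorbs_left e0_absorbs_right
      absorption_at_1[simplified])

lemma e1_conj_stabilizer: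
  assumes "c \<in> reduced_stabilizer 1"
  shows "weval r0 r1 c * e1 * weval r0 r1 (rev c) = e1"
  using assms
  by (simp add: reduced_stabilizer_def)
    (elim disjE; simp add: mult.assoc r1_e1 e1_r1 e1_conj_r0r1r0r1r0 absorption_at_1[simplified])

end

theorem lemma9p4:
  fixes d r0 r1 e0 e1 :: "'a::ring_1"
  assumes "BrG2_rels d r0 r1 e0 e1"
    and "i \<in> {0, 1::nat}"
    and "a \<in> N_stab i"
  shows "weval r0 r1 a * (if i = 0 then e0 else e1) * weval r0 r1 (rev a)
           = (if i = 0 then e0 else e1)"
proof -
  interpret brauer_G2 d r0 r1 e0 e1
    using assms(1) by unfold_locales
  have a: "is_word a" and a_stab: "wdot a (beta i) = beta i"
    using assms(3) by (simp_all add: N_stab_def)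
  obtain c where c: "c \<in> set reduced_words"
    and weval_c: "weval r0 r1 a = weval r0 r1 c" and wact_c: "wact a = wact c"
    using reduced_word_exists[OF a] by blast
  have "wdot c (beta i) = beta i"
    using a_stab wact_c by (simp add: wdot_def)
  then have c_stab: "c \<in> reduced_stabilizer i"
    using reduced_word_stabilizer[OF c assms(2)] by blast
  have "weval r0 r1 (rev a) = weval r0 r1 (rev c)"
    using weval_rev_eq[OF a reduced_word_is_word[OF c] weval_c] .
  then show ?thesis
    using assms(2) c_stab e0_conj_stabilizer e1_conj_stabilizer weval_c by auto
qed

end
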